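(* Let $\mathcal{S}=\langle\mathcal{L},\vdash\rangle$ be a Hilbert-style logic, with left variable inclusion companion $\mathcal{S}^l=\langle\mathcal{L},\vdash^l\rangle$ and restricted rules companion $\mathcal{S}^{re}=\langle\mathcal{L},\vdash^{re}\rangle$. Then $\vdash^l\,=\,\vdash^{re}$ if and only if $(\vdash^{re})^l\,=\,\vdash^l$; that is, $\vdash^l\,=\,\vdash^{re}$ holds iff for all $\Gamma\cup\{\alpha\}\subseteq\mathcal{L}$: $\Gamma\vdash^l\alpha$ iff there exists $\Delta\subseteq\Gamma$ such that $\mathrm{var}(\Delta)\subseteq\mathrm{var}(\alpha)$ and $\Delta\vdash^{re}\alpha$.
   Context: A logic is a pair $\langle\mathcal{L},\vdash\rangle$ where $\mathcal{L}$ is the formula algebra over a set of variables $V$ of some finite signature, and $\vdash\subseteq\mathcal{P}(\mathcal{L})\times\mathcal{L}$ is an arbitrary relation (written $\Gamma\vdash\alpha$). For $\alpha\in\mathcal{L}$, $\mathrm{var}(\alpha)$ is the set of variables occurring in $\alpha$, and $\mathrm{var}(\Delta)=\bigcup_{\alpha\in\Delta}\mathrm{var}(\alpha)$. A Hilbert-style logic is one given by a set of axioms $A\subseteq\mathcal{L}$ and a set of rules of inference $R\subseteq\mathcal{P}(\mathcal{L})\times\mathcal{L}$ (a rule $(\Gamma,\alpha)$ is written $\frac{\Gamma}{\alpha}$): $\Sigma\vdash\alpha$ iff there is a finite sequence $\alpha_1,\ldots,\alpha_n=\alpha$ such that each $\alpha_i$ is in $A$, or in $\Sigma$, or there is a rule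 $(\Delta,\alpha_i)\in R$ with $\Delta\subseteq\{\alpha_1,\ldots,\alpha_{i-1}\}$. For any logic $\mathcal{S}=\langle\mathcal{L},\vdash\rangle$, its left variable inclusion companion $\langle\mathcal{L},\vdash^l\rangle$ is defined by: $\Gamma\vdash^l\alpha$ iff there is $\Delta\subseteq\Gamma$ with $\mathrm{var}(\Delta)\subseteq\mathrm{var}(\alpha)$ and $\Delta\vdash\alpha$. For a Hilbert-style logic with axioms $A$ and rules $R$, its restricted rules companion $\langle\mathcal{L},\vdash^{re}\rangle$ is the Hilbert-style logic with axioms $A$ and rules $\{(\Gamma,\alpha)\in R\mid \mathrm{var}(\Gamma)\subseteq\mathrm{var}(\alpha)\}$. Here $(\vdash^{re})^l$ denotes the left variable inclusion companion of $\langle\mathcal{L},\vdash^{re}\rangle$. *)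

theory Defs
  imports Main
begin

datatype ('v, 'f) fm = Var 'v | App 'f "('v, 'f) fm list"

fun wf_fm :: "'f set \<Rightarrow> ('f \<Rightarrow> nat) \<Rightarrow> ('v, 'f) fm \<Rightarrow> bool" where
  "wf_fm F ar (Var x) = True"
| "wf_fm F ar (App f ts) = (f \<in> F \<and> length ts = ar f \<and> (\<forall>t\<in>set ts. wf_fm F ar t))"

definition formulas :: "'f set \<Rightarrow> ('f \<Rightarrow> nat) \<Rightarrow> ('v, 'f) fm set" where
  "formulas F ar = {\<phi>. wf_fm F ar \<phi>}"

fun var :: "('v, 'f) fm \<Rightarrow> 'v set" where
  "var (Var x) = {x}"
| "var (App f ts) = (\<Union>t\<in>set ts. var t)"

definition vars :: "('v, 'f) fm set \<Rightarrow> 'v set" where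
  "vars \<Delta> = (\<Union>\<alpha>\<in>\<Delta>. var \<alpha>)"

definition hilbert ::
  "'a set \<Rightarrow> ('a set \<times> 'a) set \<Rightarrow> 'a set \<Rightarrow> 'a \<Rightarrow> bool" where
  "hilbert A R \<Sigma> \<alpha> \<longleftrightarrow>
     (\<exists>xs. xs \<noteq> [] \<and> last xs = \<alpha> \<and>
        (\<forall>i < length xs. xs ! i \<in> A \<or> xs ! i \<in> \<Sigma> \<or>
           (\<exists>\<Delta>. (\<Delta>, xs ! i) \<in> R \<and> \<Delta> \<subseteq> set (take i xs))))"

definition lvi ::
  "(('v, 'f) fm set \<Rightarrow> ('v, 'f) fm \<Rightarrow> bool) \<Rightarrow> ('v, 'f) fm set \<Rightarrow> ('v, 'f) fm \<Rightarrow> bool" where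
  "lvi cons \<Gamma> \<alpha> \<longleftrightarrow> (\<exists>\<Delta>\<subseteq>\<Gamma>. vars \<Delta> \<subseteq> var \<alpha> \<and> cons \<Delta> \<alpha>)"

definition restrict_rules :: "(('v, 'f) fm set \<times> ('v, 'f) fm) set \<Rightarrow> (('v, 'f) fm set \<times> ('v, 'f) fm) set" where
  "restrict_rules R = {(\<Gamma>, \<alpha>) \<in> R. vars \<Gamma> \<subseteq> var \<alpha>}"

end

theory Submission
  imports Defs
begin

text \<open>If the premises of every rule only use variables of its conclusion, then, by induction
  on derivations, every formula derivable from \<open>\<Gamma>\<close> is already derivable from the members of
  \<open>\<Gamma>\<close> whose variables it contains. So the restricted rules companion coincides with its own left
  variable inclusion companion, and the two conditions of the theorem are literally the same.\<close>

definition hilbert_derivation :: "'a set \<Rightarrow> ('a set \<times> 'a) set \<Rightarrow> 'a set \<Rightarrow> 'a list \<Rightarrow> bool" where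
  "hilbert_derivation A R \<Sigma> xs \<longleftrightarrow>
     (\<forall>i < length xs. xs ! i \<in> A \<or> xs ! i \<in> \<Sigma> \<or>
        (\<exists>\<Delta>. (\<Delta>, xs ! i) \<in> R \<and> \<Delta> \<subseteq> set (take i xs)))"

lemma hilbert_iff_derivation:
  "hilbert A R \<Sigma> \<alpha> \<longleftrightarrow> (\<exists>xs. xs \<noteq> [] \<and> last xs = \<alpha> \<and> hilbert_derivation A R \<Sigma> xs)"
  by (simp add: hilbert_def hilbert_derivation_def)

lemma hilbert_derivation_Nil: "hilbert_derivation A R \<Sigma> []"
  by (simp add: hilbert_derivation_def)

lemma hilbert_derivation_append:
  assumes "hilbert_derivation A R \<Sigma> xs" and "hilbert_derivation A R \<Sigma> ys"
  shows "hilbert_derivation A R \<Sigma> (xs @ ys)"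
  unfolding hilbert_derivation_def
proof (intro allI impI)
  fix i assume i: "i < length (xs @ ys)"
  show "(xs @ ys) ! i \<in> A \<or> (xs @ ys) ! i \<in> \<Sigma> \<or>
    (\<exists>\<Delta>. (\<Delta>, (xs @ ys) ! i) \<in> R \<and> \<Delta> \<subseteq> set (take i (xs @ ys)))"
  proof (cases "i < length xs")
    case True
    then show ?thesis using assms(1) by (auto simp: hilbert_derivation_def nth_append)
  next
    case False
    then have "i - length xs < length ys" using i by simp
    then show ?thesis using assms(2) False
      by (fastforce simp: hilbert_derivation_def nth_append take_append)
  qed
qed

lemma hilbert_derivation_snoc:
  assumes "hilbert_derivation A R \<Sigma> xs" and "(\<Delta>, \<alpha>) \<in> R" and "\<Delta> \<subseteq> set xs"
  shows "hilbert_derivation A R \<Sigma> (xs @ [\<alpha>])"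
  using assms unfolding hilbert_derivation_def by (auto simp: nth_append less_Suc_eq)

text \<open>Rules with infinitely many premises can never fire in a derivation, hence \<open>finite \<Delta>\<close>.\<close>

inductive derivable :: "'a set \<Rightarrow> ('a set \<times> 'a) set \<Rightarrow> 'a set \<Rightarrow> 'a \<Rightarrow> bool"
  for A :: "'a set" and R :: "('a set \<times> 'a) set" and \<Sigma> :: "'a set" where
  axiom: "\<alpha> \<in> A \<Longrightarrow> derivable A R \<Sigma> \<alpha>"
| hyp: "\<alpha> \<in> \<Sigma> \<Longrightarrow> derivable A R \<Sigma> \<alpha>"
| rule: "(\<Delta>, \<alpha>) \<in> R \<Longrightarrow> finite \<Delta> \<Longrightarrow> (\<And>\<delta>. \<delta> \<in> \<Delta> \<Longrightarrow> derivable A R \<Sigma> \<delta>) \<Longrightarrow> derivable A R \<Sigma> \<alpha>"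

lemma derivable_nth_of_hilbert_derivation:
  assumes "hilbert_derivation A R \<Sigma> xs" and "i < length xs"
  shows "derivable A R \<Sigma> (xs ! i)"
  using assms(2)
proof (induction i rule: less_induct)
  case (less i)
  consider "xs ! i \<in> A" | "xs ! i \<in> \<Sigma>" | \<Delta> where "(\<Delta>, xs ! i) \<in> R" "\<Delta> \<subseteq> set (take i xs)"
    using assms(1) less.prems unfolding hilbert_derivation_def by blast
  then show ?case
  proof cases
    case (3 \<Delta>)
    have "derivable A R \<Sigma> \<delta>" if "\<delta> \<in> \<Delta>" for \<delta>
    proof -
      obtain j where "j < length (take i xs)" "take i xs ! j = \<delta>"
        using \<open>\<Delta> \<subseteq> set (take i xs)\<close> \<open>\<delta> \<in> \<Delta>\<close> by (meson in_set_conv_nth subsetD)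
      then show ?thesis using less.IH[of j] by simp
    qed
    moreover have "finite \<Delta>" using 3(2) finite_subset by blast
    ultimately show ?thesis using 3(1) by (blast intro: derivable.rule)
  qed (auto intro: derivable.intros)
qed

lemma hilbert_derivation_covering:
  assumes "finite \<Delta>" and "\<And>\<delta>. \<delta> \<in> \<Delta> \<Longrightarrow> \<exists>xs. hilbert_derivation A R \<Sigma> xs \<and> \<delta> \<in> set xs"
  shows "\<exists>xs. hilbert_derivation A R \<Sigma> xs \<and> \<Delta> \<subseteq> set xs"
  using assms
proof (induction \<Delta> rule: finite_induct)
  case empty
  then show ?case using hilbert_derivation_Nil by blast
next
  case (insert \<delta> \<Delta>)
  then obtain xs ys where "hilbert_derivation A R \<Sigma> xs" "\<Delta> \<subseteq> set xs"
    and "hilbert_derivation A R \<Sigma> ys" "\<delta> \<in> set ys"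
    by (metis insertCI)
  then show ?case by (intro exI[of _ "xs @ ys"]) (auto intro: hilbert_derivation_append)
qed

lemma hilbert_iff_derivable: "hilbert A R \<Sigma> \<alpha> \<longleftrightarrow> derivable A R \<Sigma> \<alpha>"
proof
  assume "hilbert A R \<Sigma> \<alpha>"
  then obtain xs where "xs \<noteq> []" "last xs = \<alpha>" "hilbert_derivation A R \<Sigma> xs"
    by (auto simp: hilbert_iff_derivation)
  then show "derivable A R \<Sigma> \<alpha>"
    by (metis derivable_nth_of_hilbert_derivation last_conv_nth diff_less length_greater_0_conv
        zero_less_one)
next
  assume "derivable A R \<Sigma> \<alpha>"
  then have "\<exists>xs. xs \<noteq> [] \<and> last xs = \<alpha> \<and> hilbert_derivation A R \<Sigma> xs"
  proof induction
    case (rule \<Delta> \<alpha>)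
    then obtain xs where "hilbert_derivation A R \<Sigma> xs" "\<Delta> \<subseteq> set xs"
      using hilbert_derivation_covering[of \<Delta>] by (metis last_in_set)
    then show ?case by (intro exI[of _ "xs @ [\<alpha>]"]) (auto intro: hilbert_derivation_snoc rule)
  qed (auto simp: hilbert_derivation_def intro!: exI[of _ "[_]"])
  then show "hilbert A R \<Sigma> \<alpha>" by (simp add: hilbert_iff_derivation)
qed

lemma derivable_mono:
  assumes "derivable A R \<Sigma> \<alpha>" and "R \<subseteq> R'" and "\<Sigma> \<subseteq> \<Sigma>'"
  shows "derivable A R' \<Sigma>' \<alpha>"
  using assms(1) by induction (use assms(2,3) in \<open>auto intro: derivable.intros\<close>)

lemma derivable_from_var_included_hyps:
  assumes "\<And>\<Delta> \<beta>. (\<Delta>, \<beta>) \<in> R \<Longrightarrow> vars \<Delta> \<subseteq> var \<beta>"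
    and "derivable A R \<Gamma> \<alpha>"
  shows "derivable A R {\<gamma> \<in> \<Gamma>. var \<gamma> \<subseteq> var \<alpha>} \<alpha>"
  using assms(2)
proof induction
  case (rule \<Delta> \<alpha>)
  have "derivable A R {\<gamma> \<in> \<Gamma>. var \<gamma> \<subseteq> var \<alpha>} \<delta>" if "\<delta> \<in> \<Delta>" for \<delta>
  proof -
    have "var \<delta> \<subseteq> var \<alpha>" using assms(1)[OF rule(1)] \<open>\<delta> \<in> \<Delta>\<close> by (auto simp: vars_def)
    then have "{\<gamma> \<in> \<Gamma>. var \<gamma> \<subseteq> var \<delta>} \<subseteq> {\<gamma> \<in> \<Gamma>. var \<gamma> \<subseteq> var \<alpha>}" by auto
    then show ?thesis by (rule derivable_mono[OF rule(4)[OF \<open>\<delta> \<in> \<Delta>\<close>] order_refl])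
  qed
  then show ?case by (rule derivable.rule[OF rule(1,2)])
qed (auto intro: derivable.intros)

lemma lvi_hilbert_eq_hilbert:
  assumes "\<And>\<Delta> \<beta>. (\<Delta>, \<beta>) \<in> R \<Longrightarrow> vars \<Delta> \<subseteq> var \<beta>"
  shows "lvi (hilbert A R) \<Gamma> \<alpha> \<longleftrightarrow> hilbert A R \<Gamma> \<alpha>"
proof
  assume "lvi (hilbert A R) \<Gamma> \<alpha>"
  then show "hilbert A R \<Gamma> \<alpha>"
    unfolding lvi_def hilbert_iff_derivable by (auto elim: derivable_mono)
next
  assume "hilbert A R \<Gamma> \<alpha>"
  then have "derivable A R {\<gamma> \<in> \<Gamma>. var \<gamma> \<subseteq> var \<alpha>} \<alpha>"
    using derivable_from_var_included_hyps[OF assms] by (simp add: hilbert_iff_derivable)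
  then show "lvi (hilbert A R) \<Gamma> \<alpha>"
    unfolding lvi_def hilbert_iff_derivable
    by (intro exI[of _ "{\<gamma> \<in> \<Gamma>. var \<gamma> \<subseteq> var \<alpha>}"]) (auto simp: vars_def)
qed

lemma lvi_hilbert_restrict_rules:
  "lvi (hilbert A (restrict_rules R)) \<Gamma> \<alpha> \<longleftrightarrow> hilbert A (restrict_rules R) \<Gamma> \<alpha>"
  by (rule lvi_hilbert_eq_hilbert) (simp add: restrict_rules_def)

theorem theorem2p7:
  fixes F :: "'f set" and ar :: "'f \<Rightarrow> nat"
    and A :: "('v, 'f) fm set" and R :: "(('v, 'f) fm set \<times> ('v, 'f) fm) set"
  assumes "finite F"
    and "A \<subseteq> formulas F ar"
    and "\<forall>(\<Gamma>, \<alpha>)\<in>R. \<Gamma> \<subseteq> formulas F ar \<and> \<alpha> \<in> formulas F ar"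
  shows "(\<forall>\<Gamma> \<alpha>. \<Gamma> \<subseteq> formulas F ar \<longrightarrow> \<alpha> \<in> formulas F ar \<longrightarrow>
            (lvi (hilbert A R) \<Gamma> \<alpha> \<longleftrightarrow> hilbert A (restrict_rules R) \<Gamma> \<alpha>))
     \<longleftrightarrow>
         (\<forall>\<Gamma> \<alpha>. \<Gamma> \<subseteq> formulas F ar \<longrightarrow> \<alpha> \<in> formulas F ar \<longrightarrow>
            (lvi (hilbert A R) \<Gamma> \<alpha> \<longleftrightarrow>
               (\<exists>\<Delta>\<subseteq>\<Gamma>. vars \<Delta> \<subseteq> var \<alpha> \<and> hilbert A (restrict_rules R) \<Delta> \<alpha>)))"
proof -
  have "(\<exists>\<Delta>\<subseteq>\<Gamma>. vars \<Delta> \<subseteq> var \<alpha> \<and> hilbert A (restrict_rules R) \<Delta> \<alpha>) \<longleftrightarrow>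
      hilbert A (restrict_rules R) \<Gamma> \<alpha>" for \<Gamma> \<alpha>
    using lvi_hilbert_restrict_rules unfolding lvi_def .
  then show ?thesis by simp
qed

end
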